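(* Let $n\ge 3$. Every $\sigma\in\mathcal{S}_n^{1\prec n}(1324)$ that is not a primitive (i.e. $\sigma\notin\mathcal{S}_{n,1}^{1\prec n}(1324)$) admits a unique decomposition $\sigma=\sigma_1\odot\sigma_2$ where $\sigma_1\in\mathcal{S}_{m,1}^{1\prec m}(1324)$ is a primitive for some $m\ge2$ and $\sigma_2\in\mathcal{S}_\ell^{1\prec\ell}(1324)$ with $\ell=n-m+1$.
   Context: $\mathcal{S}_n(1324)$ denotes the set of permutations of $\{1,\dots,n\}$ (in one-line notation) avoiding the pattern $1324$. For $a,k\ge1$, $\mathcal{S}_{n,k}^{a\prec n}(1324)$ is the set of $\sigma\in\mathcal{S}_n(1324)$ with $\sigma^{-1}(n)-\sigma^{-1}(a)=k$ and $\sigma^{-1}(b)>\sigma^{-1}(n)$ for all $b\in\{1,\dots,a-1\}$, and $\mathcal{S}_n^{a\prec n}(1324)=\bigcup_{k\ge1}\mathcal{S}_{n,k}^{a\prec n}(1324)$. Elements of $\mathcal{S}_{m,1}^{1\prec m}(1324)$ are called primitives; such a permutation has the form $\sigma_1=\pi_1\,1\,m\,\tau_1$. Given a primitive $\sigma_1=\pi_1\,1\,m\,\tau_1$ of size $m$ and $\sigma_2\in\mathcal{S}_\ell(1324)$ of the form $\sigma_2=\pi_2\,1\,\theta_2\,\ell\,\tau_2$ (words possibly empty), the product is $\sigma_1\odot\sigma_2=\widehat{\pi}_2\,\pi_1\,1\,m\,\widehat{\theta}_2\,n\,\widehat{\tau}_2\,\tau_1$, where $n=\ell+m-1$ and hats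 denote adding $m-1$ to each entry. *)

theory Defs
  imports Main
begin

definition is_perm :: "nat \<Rightarrow> nat list \<Rightarrow> bool" where
  "is_perm n xs \<longleftrightarrow> distinct xs \<and> set xs = {1..n}"

definition contains_1324 :: "nat list \<Rightarrow> bool" where
  "contains_1324 xs \<longleftrightarrow> (\<exists>i j k l. i < j \<and> j < k \<and> k < l \<and> l < length xs \<and>
      xs!i < xs!k \<and> xs!k < xs!j \<and> xs!j < xs!l)"

definition Av1324 :: "nat \<Rightarrow> nat list set" where
  "Av1324 n = {xs. is_perm n xs \<and> \<not> contains_1324 xs}"

text \<open>Position (0-based) of value v in the list (meaningful when v occurs in xs).\<close>
definition pos :: "nat list \<Rightarrow> nat \<Rightarrow> nat" where
  "pos xs v = length (takeWhile (\<lambda>x. x \<noteq> v) xs)"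

text \<open>S_{n,k}^{a<n}(1324): positions are compared as integers, so pos n - pos a = k with k >= 1.\<close>
definition Sk :: "nat \<Rightarrow> nat \<Rightarrow> nat \<Rightarrow> nat list set" where
  "Sk a n k = {xs. xs \<in> Av1324 n \<and> a \<in> set xs \<and> n \<in> set xs \<and>
      int (pos xs n) - int (pos xs a) = int k \<and>
      (\<forall>b \<in> {1..<a}. pos xs b > pos xs n)}"

definition S :: "nat \<Rightarrow> nat \<Rightarrow> nat list set" where
  "S a n = (\<Union>k \<in> {1..}. Sk a n k)"

definition odot :: "nat list \<Rightarrow> nat list \<Rightarrow> nat list" where
  "odot s1 s2 = (let m = length s1; l = length s2; n = l + m - 1;
      hat = map (\<lambda>x. x + (m - 1));
      \<pi>1 = takeWhile (\<lambda>x. x \<noteq> 1) s1;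
      \<tau>1 = drop (length \<pi>1 + 2) s1;
      \<pi>2 = takeWhile (\<lambda>x. x \<noteq> 1) s2;
      r2 = drop (length \<pi>2 + 1) s2;
      \<theta>2 = takeWhile (\<lambda>x. x \<noteq> l) r2;
      \<tau>2 = drop (length \<theta>2 + 1) r2
    in hat \<pi>2 @ \<pi>1 @ [1, m] @ hat \<theta>2 @ [n] @ hat \<tau>2 @ \<tau>1)"

end

theory Submission
  imports Defs "HOL-Library.Sublist"
begin

text \<open>Write \<open>\<sigma> = \<pi> 1 m \<rho>\<close> with \<open>m\<close> the entry following 1; as \<open>\<sigma>\<close> is not primitive,
  \<open>1 < m < n\<close>. Avoidance of 1324 forbids an entry below \<open>m\<close> followed by one above \<open>m\<close>,
  both inside \<open>\<pi>\<close> (they would form 1324 with \<open>m, n\<close>) and inside \<open>\<rho>\<close> (with \<open>1, m\<close>).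
  Hence \<open>\<sigma> = A B 1 m C D\<close> with \<open>A, C\<close> above \<open>m\<close>, \<open>B, D\<close> below \<open>m\<close> and \<open>n\<close> in \<open>C\<close>:
  the entries \<open>\<le> m\<close> form the primitive \<open>\<sigma>\<^sub>1 = B 1 m D\<close>, the entries \<open>\<ge> m\<close>, shifted down,
  form \<open>\<sigma>\<^sub>2\<close>, and \<open>\<sigma> = \<sigma>\<^sub>1 \<odot> \<sigma>\<^sub>2\<close>. Conversely, in any product \<open>\<sigma>\<^sub>1 \<odot> \<sigma>\<^sub>2\<close> the entry
  after 1 is the size of \<open>\<sigma>\<^sub>1\<close> and the same two restrictions return the factors,
  which gives uniqueness.\<close>

lemma contains_1324_appendI:
  assumes "xs = u @ a # v @ b # w @ c # y @ d # z" "a < c" "c < b" "b < d"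
  shows "contains_1324 xs"
  unfolding contains_1324_def
proof (intro exI conjI)
  let ?i = "length u" and ?j = "length u + 1 + length v"
  let ?k = "length u + 1 + length v + 1 + length w"
  let ?l = "length u + 1 + length v + 1 + length w + 1 + length y"
  show "?i < ?j" "?j < ?k" "?k < ?l" "?l < length xs" using assms(1) by simp_all
  show "xs ! ?i < xs ! ?k" "xs ! ?k < xs ! ?j" "xs ! ?j < xs ! ?l"
    using assms by (simp_all add: nth_append)
qed

lemma subseq_nth_Cons_drop:
  assumes "i \<le> j" "j < length xs" "subseq ys (drop (Suc j) xs)"
  shows "subseq (xs ! j # ys) (drop i xs)"
proof -
  have "drop i xs = take (j - i) (drop i xs) @ xs ! j # drop (Suc j) xs"
    using id_take_nth_drop[of "j - i" "drop i xs"] assms(1,2) by simp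
  then show ?thesis by (metis assms(3) subseq_Cons2 subseq_drop_many)
qed

lemma contains_1324_iff_subseq:
  "contains_1324 xs \<longleftrightarrow> (\<exists>a b c d. subseq [a, b, c, d] xs \<and> a < c \<and> c < b \<and> b < d)"
proof
  assume "contains_1324 xs"
  then obtain i j k l where ijkl: "i < j" "j < k" "k < l" "l < length xs"
    and vals: "xs!i < xs!k" "xs!k < xs!j" "xs!j < xs!l"
    unfolding contains_1324_def by blast
  have "subseq [xs!i, xs!j, xs!k, xs!l] (drop 0 xs)"
    using ijkl by (intro subseq_nth_Cons_drop) auto
  with vals show "\<exists>a b c d. subseq [a, b, c, d] xs \<and> a < c \<and> c < b \<and> b < d" by auto
next
  assume "\<exists>a b c d. subseq [a, b, c, d] xs \<and> a < c \<and> c < b \<and> b < d"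
  then obtain a b c d where sub: "subseq [a, b, c, d] xs" and "a < c" "c < b" "b < d" by blast
  from sub obtain u v w y z where "xs = u @ a # v @ b # w @ c # y @ d # z"
    by (auto dest!: list_emb_ConsD)
  then show "contains_1324 xs" by (rule contains_1324_appendI) fact+
qed

lemma contains_1324_subseq: "subseq ys xs \<Longrightarrow> contains_1324 ys \<Longrightarrow> contains_1324 xs"
  unfolding contains_1324_iff_subseq by (meson subseq_order.trans)

lemma contains_1324_map_mono:
  assumes mono: "\<And>x y. x \<in> set xs \<Longrightarrow> y \<in> set xs \<Longrightarrow> x < y \<Longrightarrow> f x < f y"
    and "contains_1324 (map f xs)"
  shows "contains_1324 xs"
proof -
  have less_iff: "f x < f y \<longleftrightarrow> x < y" if "x \<in> set xs" "y \<in> set xs" for x y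
    using mono[OF that] mono[OF that(2,1)] by (metis less_asym linorder_neqE_nat)
  from assms(2) obtain i j k l where "i < j" "j < k" "k < l" "l < length xs"
    "f (xs!i) < f (xs!k)" "f (xs!k) < f (xs!j)" "f (xs!j) < f (xs!l)"
    unfolding contains_1324_def by auto
  then show ?thesis unfolding contains_1324_def
    by (intro exI[of _ i] exI[of _ j] exI[of _ k] exI[of _ l]) (simp add: less_iff nth_mem)
qed

lemma set_mono_subseq: "subseq xs ys \<Longrightarrow> set xs \<subseteq> set ys"
  by (auto elim: list_emb_set)

lemma pos_append_Cons: "v \<notin> set u \<Longrightarrow> pos (u @ v # w) v = length u"
  unfolding pos_def by (induction u) auto

lemma is_perm_length: "is_perm n xs \<Longrightarrow> length xs = n"
  unfolding is_perm_def by (metis card_atLeastAtMost diff_Suc_1 distinct_card)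

lemma takeWhile_neq_append_Cons: "v \<notin> set u \<Longrightarrow> takeWhile (\<lambda>x. x \<noteq> v) (u @ v # w) = u"
  by (induction u) auto

lemma filters_greater:
  "\<forall>x \<in> set xs. m < x \<Longrightarrow> filter (\<lambda>x. x \<le> m) xs = [] \<and> filter (\<lambda>x. m \<le> x) xs = xs"
  for m :: nat by (induction xs) auto

lemma filters_less:
  "\<forall>x \<in> set xs. x < m \<Longrightarrow> filter (\<lambda>x. x \<le> m) xs = xs \<and> filter (\<lambda>x. m \<le> x) xs = []"
  for m :: nat by (induction xs) auto

lemma dropWhile_greater_less:
  assumes "m \<notin> set xs" "\<not> (\<exists>x y. subseq [x, y] xs \<and> x < m \<and> m < y)"
    and "z \<in> set (dropWhile (\<lambda>x. m < x) xs)"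
  shows "z < (m::nat)"
proof -
  obtain h rest where hr: "dropWhile (\<lambda>x. m < x) xs = h # rest"
    using assms(3) by (cases "dropWhile (\<lambda>x. m < x) xs") auto
  have "h \<in> set xs" by (metis hr list.set_intros(1) set_dropWhileD)
  with hr assms(1) have "h < m" by (metis dropWhile_eq_Cons_conv linorder_neqE_nat)
  have "subseq (h # rest) xs" by (metis hr takeWhile_dropWhile_id subseq_drop_many subseq_order.refl)
  then have "\<not> (z \<in> set rest \<and> m < z)"
    using assms(2) \<open>h < m\<close> by (metis subseq_Cons2 subseq_order.trans subseq_singleton_left)
  moreover have "z \<noteq> m" using assms(1,3) set_dropWhileD by metis
  ultimately show ?thesis using assms(3) hr \<open>h < m\<close> by auto
qed

lemma Sk_1_shape:
  assumes "\<sigma> \<in> Sk 1 n k" "k \<ge> 1"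
  obtains \<pi> \<theta> \<tau> where "\<sigma> = \<pi> @ 1 # \<theta> @ n # \<tau>" "length \<theta> = k - 1" "1 < n"
    "\<forall>x \<in> set \<pi> \<union> set \<theta> \<union> set \<tau>. 1 < x \<and> x < n"
proof -
  from assms(1) have perm: "distinct \<sigma>" "set \<sigma> = {1..n}" and "1 \<in> set \<sigma>" "n \<in> set \<sigma>"
    and gap: "int (pos \<sigma> n) - int (pos \<sigma> 1) = int k"
    unfolding Sk_def Av1324_def is_perm_def by auto
  obtain \<pi> r where \<sigma>: "\<sigma> = \<pi> @ 1 # r" and "1 \<notin> set \<pi>"
    using split_list_first[OF \<open>1 \<in> set \<sigma>\<close>] by blast
  then have pos1: "pos \<sigma> 1 = length \<pi>" by (simp add: pos_append_Cons)
  have "n \<notin> set \<pi>"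
  proof
    assume "n \<in> set \<pi>"
    then obtain \<pi>1 \<pi>2 where "\<pi> = \<pi>1 @ n # \<pi>2" "n \<notin> set \<pi>1" by (metis split_list_first)
    then have "pos \<sigma> n < length \<pi>" using \<sigma> by (simp add: pos_append_Cons)
    with gap pos1 assms(2) show False by simp
  qed
  moreover have "n \<noteq> 1" using gap pos1 assms(2) by auto
  then have "1 < n" using perm(2) \<open>1 \<in> set \<sigma>\<close> by auto
  ultimately have "n \<in> set r" using \<sigma> \<open>n \<in> set \<sigma>\<close> by auto
  then obtain \<theta> \<tau> where r: "r = \<theta> @ n # \<tau>" "n \<notin> set \<theta>" by (metis split_list_first)
  have \<sigma>': "\<sigma> = (\<pi> @ 1 # \<theta>) @ n # \<tau>" using \<sigma> r by simp
  have "pos \<sigma> n = length \<pi> + 1 + length \<theta>"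
    using \<sigma>' \<open>n \<notin> set \<pi>\<close> \<open>n \<noteq> 1\<close> r(2) pos_append_Cons[of n "\<pi> @ 1 # \<theta>" \<tau>] by simp
  with gap pos1 have "length \<theta> = k - 1" by simp
  moreover have "\<forall>x \<in> set \<pi> \<union> set \<theta> \<union> set \<tau>. 1 < x \<and> x < n"
  proof
    fix x assume "x \<in> set \<pi> \<union> set \<theta> \<union> set \<tau>"
    then have "x \<in> set \<sigma>" "x \<noteq> 1" "x \<noteq> n" using perm(1) \<sigma>' by auto
    then show "1 < x \<and> x < n" using perm(2) by auto
  qed
  ultimately show thesis using \<sigma> r \<open>1 < n\<close> by (intro that) auto
qed

lemma Sk_1_intro:
  assumes "\<sigma> \<in> Av1324 n" "\<sigma> = \<pi> @ 1 # \<theta> @ n # \<tau>" "n \<noteq> 1"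
  shows "\<sigma> \<in> Sk 1 n (Suc (length \<theta>))"
proof -
  have "distinct \<sigma>" using assms(1) unfolding Av1324_def is_perm_def by simp
  then have "1 \<notin> set \<pi>" "n \<notin> set (\<pi> @ 1 # \<theta>)" using assms(2,3) by auto
  then have "pos \<sigma> 1 = length \<pi>" "pos \<sigma> n = length \<pi> + 1 + length \<theta>"
    using pos_append_Cons[of n "\<pi> @ 1 # \<theta>" \<tau>] assms(2) by (simp_all add: pos_append_Cons)
  then show ?thesis using assms(1,2) unfolding Sk_def by simp
qed

definition lower_part :: "nat \<Rightarrow> nat list \<Rightarrow> nat list" where
  "lower_part m \<sigma> = filter (\<lambda>x. x \<le> m) \<sigma>"

text \<open>Undoes the shift by \<open>m - 1\<close> that \<open>odot\<close> applies to the entries of its second factor.\<close>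

definition upper_part :: "nat \<Rightarrow> nat list \<Rightarrow> nat list" where
  "upper_part m \<sigma> = map (\<lambda>x. x - (m - 1)) (filter (\<lambda>x. m \<le> x) \<sigma>)"

lemma Av1324_lower_part:
  assumes "\<sigma> \<in> Av1324 n" "m \<le> n"
  shows "lower_part m \<sigma> \<in> Av1324 m"
proof -
  have "\<not> contains_1324 (lower_part m \<sigma>)"
    using assms(1) contains_1324_subseq[OF subseq_filter_left]
    unfolding Av1324_def lower_part_def by blast
  moreover have "set (lower_part m \<sigma>) = {1..m}"
    using assms unfolding Av1324_def is_perm_def lower_part_def by auto
  ultimately show ?thesis using assms(1) unfolding Av1324_def is_perm_def lower_part_def by simp
qed

lemma Av1324_upper_part:
  assumes "\<sigma> \<in> Av1324 n" "1 \<le> m" "m \<le> n"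
  shows "upper_part m \<sigma> \<in> Av1324 (n - m + 1)"
proof -
  let ?f = "\<lambda>x::nat. x - (m - 1)" and ?\<rho> = "filter (\<lambda>x. m \<le> x) \<sigma>"
  have \<sigma>: "distinct \<sigma>" "set \<sigma> = {1..n}" "\<not> contains_1324 \<sigma>"
    using assms(1) unfolding Av1324_def is_perm_def by auto
  have set\<rho>: "set ?\<rho> = {m..n}" using \<sigma>(2) assms(2) by auto
  have "inj_on ?f (set ?\<rho>)" by (rule inj_onI) (use set\<rho> assms(2) in auto)
  moreover have "?f ` {m..n} = {1..n - m + 1}"
  proof
    show "{1..n - m + 1} \<subseteq> ?f ` {m..n}"
    proof
      fix y assume "y \<in> {1..n - m + 1}"
      then show "y \<in> ?f ` {m..n}" using assms(2,3) by (intro image_eqI[of _ _ "y + (m - 1)"]) auto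
    qed
  qed (use assms(2) in auto)
  moreover have "\<not> contains_1324 (map ?f ?\<rho>)"
  proof
    assume "contains_1324 (map ?f ?\<rho>)"
    then have "contains_1324 ?\<rho>"
      by (rule contains_1324_map_mono[rotated]) (use set\<rho> assms(2) in auto)
    with \<sigma>(3) show False using contains_1324_subseq[OF subseq_filter_left] by blast
  qed
  ultimately show ?thesis using \<sigma>(1) set\<rho> unfolding Av1324_def is_perm_def upper_part_def
    by (simp add: distinct_map)
qed

lemma odot_eval:
  assumes "length \<sigma>1 = m" "length \<sigma>2 = l"
    "\<sigma>1 = \<pi>1 @ 1 # m # \<tau>1" "1 \<notin> set \<pi>1"
    "\<sigma>2 = \<pi>2 @ 1 # \<theta>2 @ l # \<tau>2" "1 \<notin> set \<pi>2" "l \<notin> set \<theta>2"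
  shows "odot \<sigma>1 \<sigma>2 = map (\<lambda>x. x + (m - 1)) \<pi>2 @ \<pi>1 @ [1, m] @ map (\<lambda>x. x + (m - 1)) \<theta>2
     @ [l + m - 1] @ map (\<lambda>x. x + (m - 1)) \<tau>2 @ \<tau>1"
  using assms by (simp add: odot_def Let_def takeWhile_neq_append_Cons)

lemma odot_factors_determined:
  assumes "\<sigma>1 \<in> Sk 1 m 1" "\<sigma>2 \<in> S 1 l" "\<sigma> = odot \<sigma>1 \<sigma>2"
  shows "\<sigma> ! Suc (pos \<sigma> 1) = m" "\<sigma>1 = lower_part m \<sigma>" "\<sigma>2 = upper_part m \<sigma>"
proof -
  obtain \<pi>1 \<theta>1 \<tau>1 where \<sigma>1: "\<sigma>1 = \<pi>1 @ 1 # \<theta>1 @ m # \<tau>1" "length \<theta>1 = 0" "1 < m"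
    and bounds1: "\<forall>x \<in> set \<pi>1 \<union> set \<tau>1. 1 < x \<and> x < m"
    using Sk_1_shape[OF assms(1)] by auto
  from assms(2) obtain k where "k \<ge> 1" "\<sigma>2 \<in> Sk 1 l k" unfolding S_def by auto
  then obtain \<pi>2 \<theta>2 \<tau>2 where \<sigma>2: "\<sigma>2 = \<pi>2 @ 1 # \<theta>2 @ l # \<tau>2" "1 < l"
    and bounds2: "\<forall>x \<in> set \<pi>2 \<union> set \<theta>2 \<union> set \<tau>2. 1 < x \<and> x < l"
    by (metis Sk_1_shape)
  define h where "h x = x + (m - 1)" for x :: nat
  have len: "length \<sigma>1 = m" "length \<sigma>2 = l"
    using assms(1) \<open>\<sigma>2 \<in> Sk 1 l k\<close> by (simp_all add: Sk_def Av1324_def is_perm_length)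
  have \<sigma>: "\<sigma> = map h \<pi>2 @ \<pi>1 @ [1, m] @ map h \<theta>2 @ [l + m - 1] @ map h \<tau>2 @ \<tau>1"
    unfolding assms(3) h_def using \<sigma>1(1,2) \<sigma>2(1) bounds1 bounds2
    by (intro odot_eval[OF len]) auto
  have above: "\<forall>y \<in> set (map h xs). m < y" if "\<forall>x \<in> set xs. 1 < x" for xs
    using that \<sigma>1(3) unfolding h_def by auto
  have "\<forall>x \<in> set \<pi>2. 1 < x" "\<forall>x \<in> set \<theta>2. 1 < x" "\<forall>x \<in> set \<tau>2. 1 < x"
    using bounds2 by auto
  note shifted = this[THEN above, THEN filters_greater]
  have "\<forall>x \<in> set \<pi>1. x < m" "\<forall>x \<in> set \<tau>1. x < m" using bounds1 by auto
  note unshifted = this[THEN filters_less]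
  have "1 \<notin> set (map h \<pi>2 @ \<pi>1)"
    using \<open>\<forall>x \<in> set \<pi>2. 1 < x\<close> bounds1 unfolding h_def by auto
  then have "pos \<sigma> 1 = length (map h \<pi>2 @ \<pi>1)"
    using pos_append_Cons[of 1 "map h \<pi>2 @ \<pi>1"] \<sigma> by simp
  then show "\<sigma> ! Suc (pos \<sigma> 1) = m" using \<sigma> by (simp add: nth_append)
  show "\<sigma>1 = lower_part m \<sigma>"
    using \<sigma> \<sigma>1 \<sigma>2(2) shifted unshifted by (simp add: lower_part_def)
  have "filter (\<lambda>x. m \<le> x) \<sigma> = map h \<pi>2 @ m # map h \<theta>2 @ (l + m - 1) # map h \<tau>2"
    using \<sigma> \<sigma>1(3) \<sigma>2(2) shifted unshifted by simp
  then show "\<sigma>2 = upper_part m \<sigma>"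
    using \<sigma>1(3) \<sigma>2(1,2) by (simp add: upper_part_def h_def comp_def)
qed

lemma S_1_non_primitive_blocks:
  assumes "\<sigma> \<in> S 1 n" "\<sigma> \<notin> Sk 1 n 1"
  obtains A B m C D where "\<sigma> = A @ B @ 1 # m # C @ D" "1 < m" "m < n" "n \<in> set C"
    "\<forall>x \<in> set A \<union> set C. m < x" "\<forall>x \<in> set B \<union> set D. x < m"
proof -
  from assms(1) obtain k where "k \<ge> 1" "\<sigma> \<in> Sk 1 n k" unfolding S_def by auto
  with assms(2) have "k \<ge> 2" by (cases "k = 1") auto
  obtain pre \<theta> \<tau> where \<sigma>: "\<sigma> = pre @ 1 # \<theta> @ n # \<tau>" "length \<theta> = k - 1" "1 < n"
    and bounds: "\<forall>x \<in> set pre \<union> set \<theta> \<union> set \<tau>. 1 < x \<and> x < n"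
    by (rule Sk_1_shape[OF \<open>\<sigma> \<in> Sk 1 n k\<close> \<open>k \<ge> 1\<close>])
  then obtain m \<theta>' where \<theta>: "\<theta> = m # \<theta>'" using \<open>k \<ge> 2\<close> by (cases \<theta>) auto
  define post where "post = \<theta>' @ n # \<tau>"
  have \<sigma>_post: "\<sigma> = pre @ 1 # m # post" using \<sigma>(1) \<theta> post_def by simp
  have m: "1 < m" "m < n" using bounds \<theta> by auto
  from \<open>\<sigma> \<in> Sk 1 n k\<close> have "distinct \<sigma>" and avoid: "\<not> contains_1324 \<sigma>"
    unfolding Sk_def Av1324_def is_perm_def by auto
  then have "m \<notin> set pre" "m \<notin> set post" using \<sigma>_post by auto
  have pre_ok: "\<not> (\<exists>x y. subseq [x, y] pre \<and> x < m \<and> m < y)"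
  proof
    assume "\<exists>x y. subseq [x, y] pre \<and> x < m \<and> m < y"
    then obtain x y where xy: "subseq [x, y] pre" "x < m" "m < y" by blast
    then have "y \<in> set pre" using set_mono_subseq by fastforce
    then have "y < n" using bounds by blast
    moreover have "subseq ([x, y] @ [m, n]) \<sigma>"
      unfolding \<sigma>_post post_def using xy(1) by (intro list_emb_append_mono) auto
    ultimately have "contains_1324 \<sigma>" using xy(2,3) unfolding contains_1324_iff_subseq by fastforce
    with avoid show False ..
  qed
  have post_ok: "\<not> (\<exists>x y. subseq [x, y] post \<and> x < m \<and> m < y)"
  proof
    assume "\<exists>x y. subseq [x, y] post \<and> x < m \<and> m < y"
    then obtain x y where xy: "subseq [x, y] post" "x < m" "m < y" by blast
    then have "x \<in> set post" using set_mono_subseq by fastforce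
    then have "x \<in> set \<theta>' \<union> set \<tau>" using xy(2) m(2) unfolding post_def by auto
    then have "1 < x" using bounds \<theta> by auto
    moreover have "subseq ([1, m] @ [x, y]) \<sigma>"
      unfolding \<sigma>_post using xy(1) by (simp add: subseq_drop_many)
    ultimately have "contains_1324 \<sigma>" using xy(2,3) unfolding contains_1324_iff_subseq by fastforce
    with avoid show False ..
  qed
  define A where "A = takeWhile (\<lambda>x. m < x) pre"
  define B where "B = dropWhile (\<lambda>x. m < x) pre"
  define C where "C = takeWhile (\<lambda>x. m < x) post"
  define D where "D = dropWhile (\<lambda>x. m < x) post"
  have B: "\<forall>x \<in> set B. x < m" and D: "\<forall>x \<in> set D. x < m"
    unfolding B_def D_def using dropWhile_greater_less \<open>m \<notin> set pre\<close> \<open>m \<notin> set post\<close> pre_ok post_ok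
    by blast+
  moreover have "\<forall>x \<in> set A \<union> set C. m < x" unfolding A_def C_def by (auto dest: set_takeWhileD)
  moreover have "n \<in> set (C @ D)" unfolding C_def D_def post_def by simp
  then have "n \<in> set C" using D m(2) by auto
  moreover have "\<sigma> = A @ B @ 1 # m # C @ D" unfolding A_def B_def C_def D_def \<sigma>_post by simp
  ultimately show thesis using that m by blast
qed

lemma odot_decomposition_exists:
  assumes "\<sigma> \<in> S 1 n" "\<sigma> \<notin> Sk 1 n 1" and m: "m = \<sigma> ! Suc (pos \<sigma> 1)"
  shows "1 < m" "lower_part m \<sigma> \<in> Sk 1 m 1" "upper_part m \<sigma> \<in> S 1 (n - m + 1)"
    "\<sigma> = odot (lower_part m \<sigma>) (upper_part m \<sigma>)"
proof -
  obtain A B m' C D where \<sigma>: "\<sigma> = A @ B @ 1 # m' # C @ D" "1 < m'" "m' < n" "n \<in> set C"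
    and high: "\<forall>x \<in> set A \<union> set C. m' < x" and low: "\<forall>x \<in> set B \<union> set D. x < m'"
    using S_1_non_primitive_blocks[OF assms(1,2)] by blast
  from assms(1) have av: "\<sigma> \<in> Av1324 n" unfolding S_def Sk_def by auto
  then have "distinct \<sigma>" unfolding Av1324_def is_perm_def by simp
  then have "1 \<notin> set (A @ B)" using \<sigma>(1) by auto
  then have "pos \<sigma> 1 = length (A @ B)" using \<sigma>(1) pos_append_Cons[of 1 "A @ B"] by simp
  then have [simp]: "m' = m" using \<sigma>(1) m by (simp add: nth_append)
  show "1 < m" using \<sigma>(2) by simp
  obtain \<theta> \<tau> where C: "C = \<theta> @ n # \<tau>" "n \<notin> set \<theta>" using split_list_first[OF \<sigma>(4)] by blast
  have A: "\<forall>x \<in> set A. m < x" and \<theta>: "\<forall>x \<in> set \<theta>. m < x" and \<tau>: "\<forall>x \<in> set \<tau>. m < x"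
    and B: "\<forall>x \<in> set B. x < m" and D: "\<forall>x \<in> set D. x < m"
    using high low C(1) by auto
  define f where "f x = x - (m - 1)" for x :: nat
  define l where "l = n - m + 1"
  have lower: "lower_part m \<sigma> = B @ 1 # [] @ m # D"
    using \<sigma>(1,2,3) C(1) A[THEN filters_greater] \<theta>[THEN filters_greater] \<tau>[THEN filters_greater]
      B[THEN filters_less] D[THEN filters_less] by (simp add: lower_part_def)
  have "filter (\<lambda>x. m \<le> x) \<sigma> = A @ m # \<theta> @ n # \<tau>"
    using \<sigma>(1,2,3) C(1) A[THEN filters_greater] \<theta>[THEN filters_greater] \<tau>[THEN filters_greater]
      B[THEN filters_less] D[THEN filters_less] by simp
  then have upper: "upper_part m \<sigma> = map f A @ 1 # map f \<theta> @ l # map f \<tau>"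
    using \<sigma>(2,3) by (simp add: upper_part_def f_def l_def comp_def)
  have lower_av: "lower_part m \<sigma> \<in> Av1324 m" using Av1324_lower_part[OF av] \<sigma>(3) by simp
  have upper_av: "upper_part m \<sigma> \<in> Av1324 l"
    unfolding l_def using Av1324_upper_part[OF av] \<sigma>(2,3) by simp
  show "lower_part m \<sigma> \<in> Sk 1 m 1"
    using Sk_1_intro[OF lower_av lower] \<sigma>(2) by simp
  have "upper_part m \<sigma> \<in> Sk 1 l (Suc (length (map f \<theta>)))"
    using Sk_1_intro[OF upper_av upper] \<sigma>(3) unfolding l_def by simp
  then show "upper_part m \<sigma> \<in> S 1 (n - m + 1)" unfolding S_def l_def by auto
  have shift_back: "map (\<lambda>x. x + (m - 1)) (map f xs) = xs" if "\<forall>x \<in> set xs. m < x" for xs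
    using that by (induction xs) (auto simp: f_def)
  have "length (lower_part m \<sigma>) = m" "length (upper_part m \<sigma>) = l"
    using lower_av upper_av by (simp_all add: Av1324_def is_perm_length)
  moreover have "1 \<notin> set B" "1 \<notin> set (map f A)"
    using \<open>1 \<notin> set (A @ B)\<close> A \<sigma>(2) by (auto simp: f_def)
  moreover have "l \<notin> set (map f \<theta>)"
  proof
    assume "l \<in> set (map f \<theta>)"
    then obtain x where x: "x \<in> set \<theta>" "f x = l" by auto
    with \<theta> have "m < x" by blast
    with x(2) \<sigma>(2,3) have "x = n" unfolding f_def l_def by simp
    with x(1) C(2) show False by simp
  qed
  ultimately have "odot (lower_part m \<sigma>) (upper_part m \<sigma>) =
      map (\<lambda>x. x + (m - 1)) (map f A) @ B @ [1, m] @ map (\<lambda>x. x + (m - 1)) (map f \<theta>)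
      @ [l + m - 1] @ map (\<lambda>x. x + (m - 1)) (map f \<tau>) @ D"
    using lower upper by (intro odot_eval) simp_all
  also have "\<dots> = \<sigma>"
    using \<sigma>(1,3) C(1) A \<theta> \<tau> shift_back unfolding l_def by simp
  finally show "\<sigma> = odot (lower_part m \<sigma>) (upper_part m \<sigma>)" ..
qed

theorem mainTheorem3:
  fixes n :: nat and \<sigma> :: "nat list"
  assumes "n \<ge> 3"
    and "\<sigma> \<in> S 1 n"
    and "\<sigma> \<notin> Sk 1 n 1"
  shows "\<exists>!(\<sigma>1, \<sigma>2). \<exists>m l. m \<ge> 2 \<and> \<sigma>1 \<in> Sk 1 m 1 \<and> l = n - m + 1 \<and>
           \<sigma>2 \<in> S 1 l \<and> \<sigma> = odot \<sigma>1 \<sigma>2"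
proof -
  define m where "m = \<sigma> ! Suc (pos \<sigma> 1)"
  note decomposition = odot_decomposition_exists[OF assms(2,3) m_def]
  show ?thesis
  proof (rule ex1I[of _ "(lower_part m \<sigma>, upper_part m \<sigma>)"])
    show "case (lower_part m \<sigma>, upper_part m \<sigma>) of (\<sigma>1, \<sigma>2) \<Rightarrow> \<exists>m l. m \<ge> 2 \<and>
        \<sigma>1 \<in> Sk 1 m 1 \<and> l = n - m + 1 \<and> \<sigma>2 \<in> S 1 l \<and> \<sigma> = odot \<sigma>1 \<sigma>2"
      using decomposition by (auto intro!: exI[of _ m])
  next
    fix p
    assume "case p of (\<sigma>1, \<sigma>2) \<Rightarrow> \<exists>m l. m \<ge> 2 \<and>
        \<sigma>1 \<in> Sk 1 m 1 \<and> l = n - m + 1 \<and> \<sigma>2 \<in> S 1 l \<and> \<sigma> = odot \<sigma>1 \<sigma>2"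
    then obtain \<sigma>1 \<sigma>2 m' l where "p = (\<sigma>1, \<sigma>2)" "\<sigma>1 \<in> Sk 1 m' 1" "\<sigma>2 \<in> S 1 l"
      "\<sigma> = odot \<sigma>1 \<sigma>2" by auto
    with odot_factors_determined[of \<sigma>1 m' \<sigma>2 l \<sigma>] show "p = (lower_part m \<sigma>, upper_part m \<sigma>)"
      unfolding m_def by auto
  qed
qed

end
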